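(* The Dyck language $D$ over $\{a,b\}$ is not accepted by any left one-way jumping finite automaton (LOWJFA).
   Context: The Dyck language $D\subseteq\{a,b\}^*$ is the set of well-balanced words with $a$ as opening and $b$ as closing bracket: $w\in D$ iff $|w|_a=|w|_b$ and every prefix $u$ of $w$ satisfies $|u|_a\ge|u|_b$ (here $|w|_a$ counts occurrences of $a$). A LOWJFA is a tuple $\mathcal{A}=(\Sigma,Q,q_0,F,R)$ with $\Sigma$ a finite alphabet, $Q$ a finite set of states, $q_0\in Q$, $F\subseteq Q$, and $R\subseteq Q\times\Sigma\times Q$, where a rule $(q,a,p)\in R$ means the automaton goes from state $p$ to state $q$ deleting the symbol $a$ (with at most one target state per state and symbol). For $p\in Q$ let $\Sigma_p=\{a\in\Sigma:(q,a,p)\in R\text{ for some } q\}$. Configurations are strings in $\Sigma^*Q$. If $(q,a,p)\in R$, $x\in(\Sigma\setminus\Sigma_p)^*$ and $y\in\Sigma^*$, then the automaton moves from configuration $yaxp$ to configuration $xyq$. The accepted language is $L_L(\mathcal{A})=\{w\in\Sigma^*: \text{from configuration } wq_0 \text{ some } q_f\in F \text{ is reachable by finitely many moves}\}$. *)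

theory Defs
  imports Main
begin

definition dyck :: "'s \<Rightarrow> 's \<Rightarrow> 's list set" where
  "dyck a b = {w. set w \<subseteq> {a, b} \<and> count_list w a = count_list w b \<and>
       (\<forall>u v. w = u @ v \<longrightarrow> count_list u b \<le> count_list u a)}"

(* A LOWJFA (Sigma, Q, q0, F, R); rule (q, c, p) : R means from state p to state q
   deleting c. *)
definition is_lowjfa :: "'s set \<Rightarrow> 'q set \<Rightarrow> 'q \<Rightarrow> 'q set \<Rightarrow> ('q \<times> 's \<times> 'q) set \<Rightarrow> bool" where
  "is_lowjfa Sig Q q0 F R \<longleftrightarrow> finite Sig \<and> finite Q \<and> q0 \<in> Q \<and> F \<subseteq> Q \<and>
     R \<subseteq> Q \<times> Sig \<times> Q \<and>
     (\<forall>p c q q'. (q, c, p) \<in> R \<longrightarrow> (q', c, p) \<in> R \<longrightarrow> q = q')"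

definition sigma_of :: "('q \<times> 's \<times> 'q) set \<Rightarrow> 'q \<Rightarrow> 's set" where
  "sigma_of R p = {c. \<exists>q. (q, c, p) \<in> R}"

definition lstep :: "('q \<times> 's \<times> 'q) set \<Rightarrow> ('s list \<times> 'q) \<Rightarrow> ('s list \<times> 'q) \<Rightarrow> bool" where
  "lstep R C C' \<longleftrightarrow> (\<exists>q c p x y. (q, c, p) \<in> R \<and> set x \<inter> sigma_of R p = {} \<and>
       C = (y @ [c] @ x, p) \<and> C' = (x @ y, q))"

definition lang_L :: "'s set \<Rightarrow> ('q \<times> 's \<times> 'q) set \<Rightarrow> 'q \<Rightarrow> 'q set \<Rightarrow> 's list set" where
  "lang_L Sig R q0 F = {w. set w \<subseteq> Sig \<and> (\<exists>qf\<in>F. (lstep R)\<^sup>*\<^sup>* (w, q0) ([], qf))}"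

end

theory Submission
  imports Defs
begin

text \<open>A state moves on the last letter of the word that it can delete, and rules deleting
  the same letter in the same state agree, so every configuration of a LOWJFA has at most one
  successor, and acceptance is invariant along runs. Follow the states reached from \<open>q0\<close> by
  repeatedly deleting \<open>b\<close>. If this path reaches, after \<open>k\<close> steps, a state \<open>p\<close> that cannot delete
  \<open>b\<close>, then from \<open>p\<close> the words \<open>a\<^sup>k\<^sup>+\<^sup>1b\<close> and \<open>ba\<^sup>k\<^sup>+\<^sup>1\<close> either both cannot move or both move to
  the same configuration, so \<open>a\<^sup>k\<^sup>+\<^sup>1b\<^sup>k\<^sup>+\<^sup>1\<close> and \<open>ba\<^sup>k\<^sup>+\<^sup>1b\<^sup>k\<close> are accepted together. Otherwise the
  path stays in the finite state set forever and repeats a state at steps \<open>i < j\<close>; then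
  \<open>a\<^sup>jb\<^sup>j\<close> and \<open>a\<^sup>jb\<^sup>i\<close> are accepted together.\<close>

lemma count_list_replicate: "count_list (replicate n x) y = (if x = y then n else 0)"
  by (induction n) auto

lemma replicate_append_replicate_in_dyck: "replicate n a @ replicate n b \<in> dyck a b"
  unfolding dyck_def
proof (intro CollectI conjI allI impI)
  fix u v assume "replicate n a @ replicate n b = u @ v"
  then have "u = take (length u) (replicate n a @ replicate n b)"
    by simp
  then obtain m where "u = replicate (min m n) a @ replicate (min (m - n) n) b"
    by (simp add: take_replicate)
  then show "count_list u b \<le> count_list u a"
    by (simp add: count_list_replicate min_def)
qed (auto simp: count_list_replicate)

lemma replicate_append_replicate_notin_dyck:
  assumes "a \<noteq> b" "m \<noteq> n"
  shows "replicate m a @ replicate n b \<notin> dyck a b"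
  using assms by (simp add: dyck_def count_list_replicate)

lemma Cons_closing_notin_dyck:
  assumes "a \<noteq> b"
  shows "b # w \<notin> dyck a b"
proof
  assume "b # w \<in> dyck a b"
  then have "\<forall>u v. b # w = u @ v \<longrightarrow> count_list u b \<le> count_list u a"
    unfolding dyck_def by blast
  from this[rule_format, of "[b]" w] have "count_list [b] b \<le> count_list [b] a"
    by simp
  with assms show False by simp
qed

definition deterministic_rules :: "('q \<times> 's \<times> 'q) set \<Rightarrow> bool" where
  "deterministic_rules R \<longleftrightarrow> (\<forall>p c q q'. (q, c, p) \<in> R \<longrightarrow> (q', c, p) \<in> R \<longrightarrow> q = q')"

definition accepts_from :: "('q \<times> 's \<times> 'q) set \<Rightarrow> 'q set \<Rightarrow> 's list \<times> 'q \<Rightarrow> bool" where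
  "accepts_from R F C \<longleftrightarrow> (\<exists>qf\<in>F. (lstep R)\<^sup>*\<^sup>* C ([], qf))"

lemma lstepI:
  "(q, c, p) \<in> R \<Longrightarrow> set x \<inter> sigma_of R p = {} \<Longrightarrow> lstep R (y @ c # x, p) (x @ y, q)"
  unfolding lstep_def by force

lemma split_last_member_unique:
  assumes "y @ c # x = y' @ c' # x'" "c \<in> S" "c' \<in> S" "set x \<inter> S = {}" "set x' \<inter> S = {}"
  shows "y = y' \<and> c = c' \<and> x = x'"
proof -
  from assms(1) obtain us where
    "(y = y' @ us \<and> us @ c # x = c' # x') \<or> (y @ us = y' \<and> c # x = us @ c' # x')"
    by (auto simp: append_eq_append_conv2)
  with assms(2-5) show ?thesis by (cases us) auto
qed

lemma lstep_deterministic: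
  assumes "deterministic_rules R" "lstep R C C1" "lstep R C C2"
  shows "C1 = C2"
proof -
  obtain q c p x y where 1: "(q, c, p) \<in> R" "set x \<inter> sigma_of R p = {}"
      "C = (y @ c # x, p)" "C1 = (x @ y, q)"
    using assms(2) unfolding lstep_def by auto
  obtain q' c' x' y' where 2: "(q', c', p) \<in> R" "set x' \<inter> sigma_of R p = {}"
      "C = (y' @ c' # x', p)" "C2 = (x' @ y', q')"
    using assms(3) 1(3) unfolding lstep_def by auto
  have "c \<in> sigma_of R p" "c' \<in> sigma_of R p"
    using 1(1) 2(1) by (auto simp: sigma_of_def)
  with 1 2 have "y = y' \<and> c = c' \<and> x = x'"
    using split_last_member_unique[of y c x y' c' x'] by auto
  with 1 2 assms(1) show ?thesis
    unfolding deterministic_rules_def by blast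
qed

lemma accepts_from_lstep_iff:
  assumes "deterministic_rules R" "lstep R C C'"
  shows "accepts_from R F C \<longleftrightarrow> accepts_from R F C'"
proof
  assume "accepts_from R F C"
  then obtain qf where qf: "qf \<in> F" "(lstep R)\<^sup>*\<^sup>* C ([], qf)"
    unfolding accepts_from_def by blast
  from qf(2) show "accepts_from R F C'"
  proof (cases rule: converse_rtranclpE)
    case base
    with assms(2) show ?thesis unfolding lstep_def by auto
  next
    case (step C'')
    with assms have "C'' = C'" using lstep_deterministic by metis
    with step qf(1) show ?thesis unfolding accepts_from_def by blast
  qed
next
  assume "accepts_from R F C'"
  with assms(2) show "accepts_from R F C"
    unfolding accepts_from_def by (meson converse_rtranclp_into_rtranclp)
qed

lemma accepts_from_rtranclp_iff:
  assumes "deterministic_rules R" "(lstep R)\<^sup>*\<^sup>* C C'"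
  shows "accepts_from R F C \<longleftrightarrow> accepts_from R F C'"
  using assms(2) by induction (use accepts_from_lstep_iff[OF assms(1)] in auto)

lemma not_accepts_from_if_sigma_empty:
  assumes "sigma_of R p = {}" "w \<noteq> []"
  shows "\<not> accepts_from R F (w, p)"
proof
  assume "accepts_from R F (w, p)"
  then obtain qf where "(lstep R)\<^sup>*\<^sup>* (w, p) ([], qf)"
    unfolding accepts_from_def by blast
  then show False
    by (cases rule: converse_rtranclpE) (use assms in \<open>auto simp: lstep_def sigma_of_def\<close>)
qed

text \<open>Once a state cannot delete \<open>c\<close>, the \<open>SOME\<close> yields an arbitrary state; the path is only
  used before that point.\<close>

primrec letter_path :: "('q \<times> 's \<times> 'q) set \<Rightarrow> 's \<Rightarrow> 'q \<Rightarrow> nat \<Rightarrow> 'q" where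
  "letter_path R c q 0 = q"
| "letter_path R c q (Suc n) = (SOME q'. (q', c, letter_path R c q n) \<in> R)"

lemma letter_path_rule:
  assumes "c \<in> sigma_of R (letter_path R c q n)"
  shows "(letter_path R c q (Suc n), c, letter_path R c q n) \<in> R"
  using assms unfolding sigma_of_def by (auto intro: someI)

lemma rtranclp_lstep_letter_path:
  assumes "\<forall>i<k. c \<in> sigma_of R (letter_path R c q i)"
  shows "(lstep R)\<^sup>*\<^sup>* (u @ replicate k c, q) (u, letter_path R c q k)"
  using assms
proof (induction k arbitrary: u)
  case (Suc k)
  then have "c \<in> sigma_of R (letter_path R c q k)"
    by simp
  then have "lstep R (u @ [c], letter_path R c q k) (u, letter_path R c q (Suc k))"
    using lstepI[OF letter_path_rule, where x="[]" and y=u] by simp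
  moreover have "(lstep R)\<^sup>*\<^sup>* ((u @ [c]) @ replicate k c, q) (u @ [c], letter_path R c q k)"
    using Suc.IH[of "u @ [c]"] Suc.prems by simp
  ultimately show ?case
    by (simp add: replicate_app_Cons_same rtranclp.rtrancl_into_rtrancl)
qed simp

lemma accepts_from_append_replicate_iff:
  assumes "deterministic_rules R" "\<forall>i<k. c \<in> sigma_of R (letter_path R c q i)"
  shows "accepts_from R F (u @ replicate k c, q) \<longleftrightarrow> accepts_from R F (u, letter_path R c q k)"
  using accepts_from_rtranclp_iff[OF assms(1) rtranclp_lstep_letter_path[OF assms(2)]] .

lemma letter_path_repeats:
  assumes "finite Q" "q \<in> Q" "R \<subseteq> Q \<times> Sig \<times> Q"
    and "\<forall>n. c \<in> sigma_of R (letter_path R c q n)"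
  obtains i j where "i < j" "letter_path R c q i = letter_path R c q j"
proof -
  have "letter_path R c q n \<in> Q" for n
  proof (cases n)
    case (Suc m)
    have "(letter_path R c q (Suc m), c, letter_path R c q m) \<in> R"
      using assms(4) by (simp only: letter_path_rule)
    with assms(3) show ?thesis
      unfolding Suc by blast
  qed (simp add: assms(2))
  then have "finite (range (letter_path R c q))"
    using assms(1) by (auto intro: finite_subset)
  then have "\<not> inj (letter_path R c q)"
    using finite_imageD[of "letter_path R c q" UNIV] by auto
  then obtain i j where "i \<noteq> j" "letter_path R c q i = letter_path R c q j"
    unfolding inj_def by blast
  with that show thesis
    by (metis linorder_neqE_nat)
qed

lemma accepts_from_append_replicate_pump:
  assumes "deterministic_rules R" "\<forall>n<j. c \<in> sigma_of R (letter_path R c q n)"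
    and "i < j" "letter_path R c q i = letter_path R c q j"
  shows "accepts_from R F (u @ replicate i c, q) \<longleftrightarrow> accepts_from R F (u @ replicate j c, q)"
  using assms by (simp add: accepts_from_append_replicate_iff)

lemma accepts_from_swap_if_closing_blocked:
  assumes det: "deterministic_rules R"
    and "sigma_of R p \<subseteq> {a, b}" "b \<notin> sigma_of R p"
    and acc: "accepts_from R F (replicate (Suc n) a @ [b], p)"
  shows "accepts_from R F (b # replicate (Suc n) a, p)"
proof (cases "a \<in> sigma_of R p")
  case True
  then obtain q where q: "(q, a, p) \<in> R"
    unfolding sigma_of_def by auto
  have "lstep R (replicate (Suc n) a @ [b], p) (b # replicate n a, q)"
    using lstepI[OF q, of "[b]" "replicate n a"] assms(3) by (simp add: replicate_app_Cons_same)
  moreover have "lstep R (b # replicate (Suc n) a, p) (b # replicate n a, q)"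
    using lstepI[OF q, of "[]" "b # replicate n a"] by (simp add: replicate_app_Cons_same)
  ultimately show ?thesis
    using acc by (simp add: accepts_from_lstep_iff[OF det])
next
  case False
  with assms(2,3) have "sigma_of R p = {}"
    by auto
  from not_accepts_from_if_sigma_empty[OF this] acc show ?thesis
    by simp
qed

lemma accepts_from_swap_at_blocked_letter_path:
  assumes det: "deterministic_rules R"
    and "\<forall>i<k. b \<in> sigma_of R (letter_path R b q i)" "b \<notin> sigma_of R (letter_path R b q k)"
    and "sigma_of R (letter_path R b q k) \<subseteq> {a, b}"
    and "accepts_from R F (replicate (Suc k) a @ replicate (Suc k) b, q)"
  shows "accepts_from R F (b # replicate (Suc k) a @ replicate k b, q)"
proof -
  have "accepts_from R F (replicate (Suc k) a @ [b], letter_path R b q k)"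
    using accepts_from_append_replicate_iff[OF det assms(2), where u="replicate (Suc k) a @ [b]"]
      assms(5) by (simp add: replicate_app_Cons_same)
  then have "accepts_from R F (b # replicate (Suc k) a, letter_path R b q k)"
    using accepts_from_swap_if_closing_blocked[OF det assms(4,3)] by blast
  then show ?thesis
    using accepts_from_append_replicate_iff[OF det assms(2), where u="b # replicate (Suc k) a"]
    by simp
qed

theorem lemma2:
  fixes Sig :: "'s set" and Q :: "'q set" and q0 :: 'q and F :: "'q set"
    and R :: "('q \<times> 's \<times> 'q) set" and a b :: 's
  assumes "a \<noteq> b" and "Sig = {a, b}"
    and "is_lowjfa Sig Q q0 F R"
  shows "lang_L Sig R q0 F \<noteq> dyck a b"
proof
  assume L: "lang_L Sig R q0 F = dyck a b"
  have det: "deterministic_rules R" and "finite Q" "q0 \<in> Q" and RQ: "R \<subseteq> Q \<times> {a, b} \<times> Q"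
    using assms(2,3) unfolding is_lowjfa_def deterministic_rules_def by auto
  have dyck_iff: "w \<in> dyck a b \<longleftrightarrow> accepts_from R F (w, q0)" if "set w \<subseteq> {a, b}" for w
    using that unfolding L[symmetric] lang_L_def accepts_from_def assms(2) by blast
  let ?path = "letter_path R b q0"
  show False
  proof (cases "\<forall>n. b \<in> sigma_of R (?path n)")
    case True
    then obtain i j where "i < j" "?path i = ?path j"
      using letter_path_repeats[OF \<open>finite Q\<close> \<open>q0 \<in> Q\<close> RQ] by blast
    with True show False
      using accepts_from_append_replicate_pump[OF det, of j b q0 i F "replicate j a"]
        dyck_iff replicate_append_replicate_in_dyck[of j a b]
        replicate_append_replicate_notin_dyck[OF assms(1), of j i]
      by (auto simp: subset_iff)
  next
    case False
    then obtain k where "b \<notin> sigma_of R (?path k)" "\<forall>i<k. b \<in> sigma_of R (?path i)"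
      using exists_least_iff[of "\<lambda>k. b \<notin> sigma_of R (?path k)"]
      by (auto simp del: letter_path.simps)
    moreover have "sigma_of R (?path k) \<subseteq> {a, b}"
      using RQ unfolding sigma_of_def by auto
    ultimately show False
      using accepts_from_swap_at_blocked_letter_path[OF det, of k b q0 a F]
        dyck_iff replicate_append_replicate_in_dyck[of "Suc k" a b]
        dyck_iff[of "b # replicate (Suc k) a @ replicate k b"] Cons_closing_notin_dyck[OF assms(1)]
      by (auto simp: subset_iff)
  qed
qed

end
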